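(* In the model described in the context, if $\tau \leq 3f$, then it is impossible to implement an a-audit operation satisfying both completeness and weak accuracy.
   Context: Model. An asynchronous system has an arbitrary number of client processes (writers, readers, auditors) and $n$ storage objects $o_1,\dots,o_n$. Each $o_k$ is a linearisable loggable read/write register holding a block from a domain $\mathbb{B}$ and a log $L_k$ (initially empty). Its operations are: rw-write($b$), which stores $b$ and returns an ack; rw-read(), which returns the currently stored block (or $\perp$ if none) and appends to $L_k$ the record $\langle p_r, \mathit{label}(b)\rangle$, where $p_r$ is the invoking reader and $\mathit{label}(b)$ identifies the value from which $b$ was derived; and rw-getLog(), which returns $L_k$. On top of these objects, a multi-writer multi-reader register over a value domain $\mathbb{V}$ is emulated by information dispersal. An a-write($v$) encodes $v$ into $n$ blocks $b_{v_1},\dots,b_{v_n}$ and sends $b_{v_k}$ to $o_k$. A reader can recover $v$ from any $\tau$ distinct blocks of $v$, and cannot recover it from fewer; $\tau>f$. Reads are fast (a single round-trip to the objects). Concurrency is unlimited, and writes may remain incomplete. Faults. Writers and auditors are honest and can only crash. Faulty readers may crash or contact only a subset of the objects. At most $f$ storage objects are faulty. A faulty object may crash, omit its block from readers, omit log records from auditors, and report records of reads that never occurred. Providing set $P_{p_r,v}$ in history $\sigma$: the set of objects $o_k$ such that $\sigma$ contains both an event in which $o_k$ receives a write request for $b_{v_k}$ and an event in which $o_k$ responds $b_{v_k}$ to a read request of $p_r$. The value $v$ is effectively read by $p_r$ iff $|P_{p_r,v}|\ge\tau$. Audit. An a-audit obtains logs via rw-getLog from an auditing quorum $A$ of $n-f$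 objects (availability). It returns a set $E_A$ of evidences. An evidence $\mathcal{E}_{p_r,v}$ is created from at least $t\ge1$ records $\langle p_r,\mathit{label}(v)\rangle$ from distinct objects. Completeness: for all readers $p_r$ and values $v$, $|P_{p_r,v}|\ge\tau$ before the audit implies $\mathcal{E}_{p_r,v}\in E_A$. Weak accuracy: for every correct reader $p_r$ that never invoked an a-read before the audit (so $P_{p_r,v}=\varnothing$ for all $v$), $\mathcal{E}_{p_r,v}\notin E_A$ for all $v$. *)

theory Defs
  imports Main
begin

text \<open>
  Abstract model of an execution prefix up to the moment of an a-audit.
  Storage objects are indexed by the naturals k < n (objects outside this range
  do not exist).
  A log record is a pair (reader, label of value).
\<close>

record ('p, 'v) scenario =
  faulty          :: "nat set"
  served          :: "nat \<Rightarrow> ('p \<times> 'v) set"   \<comment> \<open>(p,v) \<in> served k: o_k received the write of its block of v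
                                                   and responded that block to a read of p (before the audit)\<close>
  reported        :: "nat \<Rightarrow> ('p \<times> 'v) list"  \<comment> \<open>log returned by rw-getLog of o_k to the auditor\<close>
  invoked         :: "'p set"                  \<comment> \<open>readers that invoked an a-read before the audit\<close>
  correct_readers :: "'p set"
  quorum          :: "nat set"                 \<comment> \<open>auditing quorum A chosen by the asynchronous scheduler\<close>

definition admissible :: "nat \<Rightarrow> nat \<Rightarrow> ('p, 'v) scenario \<Rightarrow> bool" where
  "admissible n f sc \<longleftrightarrow>
     faulty sc \<subseteq> {..<n} \<and> card (faulty sc) \<le> f \<and>
     (\<forall>k. n \<le> k \<longrightarrow> served sc k = {} \<and> reported sc k = []) \<and>
     \<comment> \<open>correct objects log exactly the reads they serve\<close>
     (\<forall>k<n. k \<notin> faulty sc \<longrightarrow> set (reported sc k) = served sc k) \<and>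
     \<comment> \<open>only readers that invoked an a-read get served\<close>
     (\<forall>k p v. (p, v) \<in> served sc k \<longrightarrow> p \<in> invoked sc) \<and>
     quorum sc \<subseteq> {..<n} \<and> card (quorum sc) = n - f"

definition providing_set :: "('p, 'v) scenario \<Rightarrow> 'p \<Rightarrow> 'v \<Rightarrow> nat set" where
  "providing_set sc p v = {k. (p, v) \<in> served sc k}"

definition effectively_read :: "nat \<Rightarrow> ('p, 'v) scenario \<Rightarrow> 'p \<Rightarrow> 'v \<Rightarrow> bool" where
  "effectively_read tau sc p v \<longleftrightarrow> tau \<le> card (providing_set sc p v)"

text \<open>An audit algorithm maps the auditing quorum and the logs obtained from it
  (objects outside the quorum contribute nothing) to a set of evidences (p,v).\<close>
type_synonym ('p, 'v) audit_alg = "nat set \<Rightarrow> (nat \<Rightarrow> ('p \<times> 'v) list) \<Rightarrow> ('p \<times> 'v) set"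

definition audit_result :: "('p, 'v) audit_alg \<Rightarrow> ('p, 'v) scenario \<Rightarrow> ('p \<times> 'v) set" where
  "audit_result aud sc =
     aud (quorum sc) (\<lambda>k. if k \<in> quorum sc then reported sc k else [])"

definition evidence_based :: "nat \<Rightarrow> ('p, 'v) audit_alg \<Rightarrow> bool" where
  "evidence_based t aud \<longleftrightarrow> 1 \<le> t \<and>
     (\<forall>A L p v. (p, v) \<in> aud A L \<longrightarrow> t \<le> card {k \<in> A. (p, v) \<in> set (L k)})"

definition audit_complete :: "nat \<Rightarrow> nat \<Rightarrow> nat \<Rightarrow> ('p, 'v) audit_alg \<Rightarrow> bool" where
  "audit_complete n f tau aud \<longleftrightarrow>
     (\<forall>sc. admissible n f sc \<longrightarrow>
        (\<forall>p v. effectively_read tau sc p v \<longrightarrow> (p, v) \<in> audit_result aud sc))"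

definition audit_weakly_accurate :: "nat \<Rightarrow> nat \<Rightarrow> ('p, 'v) audit_alg \<Rightarrow> bool" where
  "audit_weakly_accurate n f aud \<longleftrightarrow>
     (\<forall>sc. admissible n f sc \<longrightarrow>
        (\<forall>p \<in> correct_readers sc. p \<notin> invoked sc \<longrightarrow>
           (\<forall>v. (p, v) \<notin> audit_result aud sc)))"

end

theory Submission
  imports Defs
begin

text \<open>
  Let reader p read v from the last \<tau> objects, the first f of which are faulty and
  hide their records, and let the auditing quorum be the first n - f objects. The
  auditor then sees records only from the at most \<tau> - 2f \<le> f correct objects in
  between. Those f objects could equally be faulty and fabricate the same records
  for a correct p that never read, so the auditor cannot tell the two executions
  apart: it must both report and not report the evidence for (p, v). The argument
  never uses that evidences are backed by records, so it rules out every auditor.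
\<close>

definition auditor_view :: "('p, 'v) scenario \<Rightarrow> nat \<Rightarrow> ('p \<times> 'v) list" where
  "auditor_view sc = (\<lambda>k. if k \<in> quorum sc then reported sc k else [])"

lemma audit_result_eq_if_same_view:
  fixes aud :: "('p, 'v) audit_alg"
  assumes "quorum sc1 = quorum sc2" and "auditor_view sc1 = auditor_view sc2"
  shows "audit_result aud sc1 = audit_result aud sc2"
  using assms by (simp add: audit_result_def auditor_view_def)

lemma no_complete_weakly_accurate_audit_if_indistinguishable:
  fixes sc1 sc2 :: "('p, 'v) scenario" and aud :: "('p, 'v) audit_alg"
  assumes "admissible n f sc1" and "admissible n f sc2"
    and "quorum sc1 = quorum sc2" and "auditor_view sc1 = auditor_view sc2"
    and "effectively_read tau sc1 p v"
    and "p \<in> correct_readers sc2" and "p \<notin> invoked sc2"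
  shows "\<not> (audit_complete n f tau aud \<and> audit_weakly_accurate n f aud)"
proof
  assume "audit_complete n f tau aud \<and> audit_weakly_accurate n f aud"
  then have "(p, v) \<in> audit_result aud sc1" and "(p, v) \<notin> audit_result aud sc2"
    using assms unfolding audit_complete_def audit_weakly_accurate_def by blast+
  moreover have "audit_result aud sc1 = audit_result aud sc2"
    using assms(3,4) by (rule audit_result_eq_if_same_view)
  ultimately show False by simp
qed

definition hidden_read_scenario :: "nat \<Rightarrow> nat \<Rightarrow> nat \<Rightarrow> 'p \<Rightarrow> 'v \<Rightarrow> ('p, 'v) scenario" where
  "hidden_read_scenario n f tau p v =
    \<lparr> faulty = {n - tau..<n - tau + f},
      served = (\<lambda>k. if k \<in> {n - tau..<n} then {(p, v)} else {}),
      reported = (\<lambda>k. if k \<in> {n - tau + f..<n} then [(p, v)] else []),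
      invoked = UNIV, correct_readers = UNIV, quorum = {..<n - f} \<rparr>"

definition fabricated_read_scenario :: "nat \<Rightarrow> nat \<Rightarrow> nat \<Rightarrow> 'p \<Rightarrow> 'v \<Rightarrow> ('p, 'v) scenario" where
  "fabricated_read_scenario n f tau p v =
    \<lparr> faulty = {n - tau + f..<n - f},
      served = (\<lambda>k. {}),
      reported = (\<lambda>k. if k \<in> {n - tau + f..<n - f} then [(p, v)] else []),
      invoked = {}, correct_readers = {p}, quorum = {..<n - f} \<rparr>"

lemma admissible_hidden_read_scenario:
  assumes "f < tau" and "tau \<le> n"
  shows "admissible n f (hidden_read_scenario n f tau p v)"
  using assms by (auto simp: admissible_def hidden_read_scenario_def)

lemma effectively_read_hidden_read_scenario:
  assumes "tau \<le> n"
  shows "effectively_read tau (hidden_read_scenario n f tau p v) p v"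
proof -
  have "providing_set (hidden_read_scenario n f tau p v) p v = {n - tau..<n}"
    by (auto simp: providing_set_def hidden_read_scenario_def)
  then show ?thesis
    using assms by (simp add: effectively_read_def)
qed

lemma admissible_fabricated_read_scenario:
  assumes "tau \<le> 3 * f" and "tau \<le> n"
  shows "admissible n f (fabricated_read_scenario n f tau p v)"
  using assms by (auto simp: admissible_def fabricated_read_scenario_def)

lemma auditor_view_hidden_eq_fabricated:
  assumes "f < tau" and "tau \<le> n"
  shows "auditor_view (hidden_read_scenario n f tau p v)
       = auditor_view (fabricated_read_scenario n f tau p v)"
  using assms
  by (auto simp: auditor_view_def hidden_read_scenario_def fabricated_read_scenario_def
      fun_eq_iff)

theorem theorem1:
  fixes n f tau :: nat
  assumes "f < tau" and "tau \<le> n" and "tau \<le> 3 * f"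
  shows "\<not> (\<exists>(aud :: ('p, 'v) audit_alg) t.
             evidence_based t aud \<and> audit_complete n f tau aud \<and> audit_weakly_accurate n f aud)"
proof -
  fix p :: 'p and v :: 'v
  have "\<not> (audit_complete n f tau aud \<and> audit_weakly_accurate n f aud)"
    for aud :: "('p, 'v) audit_alg"
  proof (rule no_complete_weakly_accurate_audit_if_indistinguishable)
    show "admissible n f (hidden_read_scenario n f tau p v)"
      using assms(1,2) by (rule admissible_hidden_read_scenario)
    show "admissible n f (fabricated_read_scenario n f tau p v)"
      using assms(3,2) by (rule admissible_fabricated_read_scenario)
    show "auditor_view (hidden_read_scenario n f tau p v)
        = auditor_view (fabricated_read_scenario n f tau p v)"
      using assms(1,2) by (rule auditor_view_hidden_eq_fabricated)
    show "effectively_read tau (hidden_read_scenario n f tau p v) p v"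
      using assms(2) by (rule effectively_read_hidden_read_scenario)
  qed (simp_all add: hidden_read_scenario_def fabricated_read_scenario_def)
  then show ?thesis by blast
qed

end
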